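(* Let $\mu$ be an Ising model on $\{-1,1\}^p$ with $\ell_1$-width at most $\gamma>0$ and $u\in[p]$. For every $\underline\theta_u\in\mathbb R^p$ with $\|\underline\theta_u\|_1\le\gamma$, \[ \mathcal L_u(\underline\theta_u)-\mathcal L_u(\underline\theta^*_u)-\langle\nabla\mathcal L_u(\underline\theta^*_u),\underline\theta_u-\underline\theta^*_u\rangle\ \ge\ \frac{e^{-3\gamma}}{2+2\gamma}\max_{v\ne u}|\theta_{u,v}-\theta^*_{u,v}|^2 . \]
   Context: Ising model: $\mu(\underline\sigma)\propto\exp\big(\sum_{\{u,v\}}\theta^*_{u,v}\sigma_u\sigma_v+\sum_u\theta^*_u\sigma_u\big)$ on $\{-1,1\}^p$, first sum over unordered pairs of distinct indices, symmetric couplings $\theta^*_{u,v}=\theta^*_{v,u}$; $\ell_1$-width at most $\gamma$ means $\sum_{v\ne u}|\theta^*_{u,v}|+|\theta^*_u|\le\gamma$ for all $u$. Local parameter vector $\underline\theta_u=(\theta_u,(\theta_{u,v})_{v\ne u})\in\mathbb R^p$ with true value $\underline\theta^*_u=(\theta^*_u,(\theta^*_{u,v})_{v\ne u})$; local energy $E_u(\underline\sigma;\underline\theta_u)=\sigma_u(\theta_u+\sum_{v\ne u}\theta_{u,v}\sigma_v)$; interaction screening loss $\mathcal L_u(\underline\theta_u)=\mathbb E_\mu[e^{-E_u(\underline\sigma;\underline\theta_u)}]$. *)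

theory Defs
  imports "HOL-Analysis.Analysis"
begin

text \<open>Spin configurations on the finite node set 'n (so p = CARD('n)).\<close>
definition spins :: "('n::finite \<Rightarrow> real) set" where
  "spins = {\<sigma>. \<forall>v. \<sigma> v \<in> {-1, 1}}"

text \<open>Ising Hamiltonian: sum over unordered pairs {u,v}, u \<noteq> v, written as half the
  sum over ordered pairs (couplings are assumed symmetric), plus the field term.\<close>
definition ising_H :: "('n::finite \<Rightarrow> 'n \<Rightarrow> real) \<Rightarrow> ('n \<Rightarrow> real) \<Rightarrow> ('n \<Rightarrow> real) \<Rightarrow> real" where
  "ising_H J h \<sigma> = (1/2) * (\<Sum>u\<in>UNIV. \<Sum>v\<in>UNIV - {u}. J u v * \<sigma> u * \<sigma> v) + (\<Sum>u\<in>UNIV. h u * \<sigma> u)"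

definition ising_Z :: "('n::finite \<Rightarrow> 'n \<Rightarrow> real) \<Rightarrow> ('n \<Rightarrow> real) \<Rightarrow> real" where
  "ising_Z J h = (\<Sum>\<sigma>\<in>spins. exp (ising_H J h \<sigma>))"

definition ising_mu :: "('n::finite \<Rightarrow> 'n \<Rightarrow> real) \<Rightarrow> ('n \<Rightarrow> real) \<Rightarrow> ('n \<Rightarrow> real) \<Rightarrow> real" where
  "ising_mu J h \<sigma> = exp (ising_H J h \<sigma>) / ising_Z J h"

definition l1_width_le :: "('n::finite \<Rightarrow> 'n \<Rightarrow> real) \<Rightarrow> ('n \<Rightarrow> real) \<Rightarrow> real \<Rightarrow> bool" where
  "l1_width_le J h \<gamma> \<longleftrightarrow> (\<forall>u. (\<Sum>v\<in>UNIV - {u}. \<bar>J u v\<bar>) + \<bar>h u\<bar> \<le> \<gamma>)"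

text \<open>Local parameter vector in R^p: coordinate u is the field theta_u,
  coordinate v \<noteq> u is the coupling theta_{u,v}.\<close>
definition local_energy :: "'n::finite \<Rightarrow> ('n \<Rightarrow> real) \<Rightarrow> real^'n \<Rightarrow> real" where
  "local_energy u \<sigma> \<theta> = \<sigma> u * (\<theta>$u + (\<Sum>v\<in>UNIV - {u}. \<theta>$v * \<sigma> v))"

definition true_local_param :: "('n::finite \<Rightarrow> 'n \<Rightarrow> real) \<Rightarrow> ('n \<Rightarrow> real) \<Rightarrow> 'n \<Rightarrow> real^'n" where
  "true_local_param J h u = (\<chi> v. if v = u then h u else J u v)"

definition ISO_loss :: "('n::finite \<Rightarrow> 'n \<Rightarrow> real) \<Rightarrow> ('n \<Rightarrow> real) \<Rightarrow> 'n \<Rightarrow> real^'n \<Rightarrow> real" where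
  "ISO_loss J h u \<theta> = (\<Sum>\<sigma>\<in>spins. ising_mu J h \<sigma> * exp (- local_energy u \<sigma> \<theta>))"

definition l1norm :: "real^'n::finite \<Rightarrow> real" where
  "l1norm x = (\<Sum>v\<in>UNIV. \<bar>x$v\<bar>)"

end

theory Submission
  imports Defs
begin

(* With the features x(sigma) = sigma_u (1, (sigma_w)_{w ~= u}) the loss is
   L(theta) = E exp(-<theta, x>), so its Bregman divergence at theta* is
   E[exp(-<theta*, x>) (exp(-z) - 1 + z)] with z = <theta - theta*, x>.  Since
   |<theta*, x>| <= gamma, |z| <= 2 gamma and exp(-z) - 1 + z >= z^2 / (2 + |z|), the divergence is
   at least exp(-gamma) / (2 + 2 gamma) E[z^2].  Flipping sigma_v for v ~= u changes z by
   +-2 (theta_v - theta*_v) and the Gibbs weight by a factor at least exp(-2 gamma); pairing each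
   configuration with its flip gives E[z^2] >= exp(-2 gamma) (theta_v - theta*_v)^2. *)

lemma exp_minus_sub_one_add_ge:
  fixes z :: real
  shows "z\<^sup>2 / (2 + \<bar>z\<bar>) \<le> exp (- z) - 1 + z"
proof (cases "z \<ge> 0")
  case True
  let ?f = "\<lambda>t::real. (2 + t) * exp (- t) + t - 2"
  have "?f 0 \<le> ?f z"
  proof (rule DERIV_nonneg_imp_nondecreasing[OF True])
    fix t :: real
    have "(1 + t) * exp (- t) \<le> exp t * exp (- t)"
      by (intro mult_right_mono) auto
    then have "0 \<le> 1 - (1 + t) * exp (- t)"
      by (simp add: exp_minus_inverse)
    moreover have "DERIV ?f t :> 1 - (1 + t) * exp (- t)"
      by (auto intro!: derivative_eq_intros simp: algebra_simps)
    ultimately show "\<exists>y. DERIV ?f t :> y \<and> y \<ge> 0" by blast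
  qed
  then have "z\<^sup>2 \<le> (exp (- z) - 1 + z) * (2 + \<bar>z\<bar>)"
    using True by (simp add: algebra_simps power2_eq_square)
  then show ?thesis
    using True by (simp add: divide_le_eq add_pos_nonneg)
next
  case False
  have "z\<^sup>2 / (2 + \<bar>z\<bar>) \<le> z\<^sup>2 / 2"
    by (rule divide_left_mono) auto
  also have "\<dots> \<le> exp (- z) - 1 + z"
    using exp_lower_Taylor_quadratic[of "- z"] False by simp
  finally show ?thesis .
qed

lemma exp_bregman_ge:
  fixes s z :: real
  assumes "\<bar>s\<bar> \<le> a" and "\<bar>z\<bar> \<le> b"
  shows "exp (- a) / (2 + b) * z\<^sup>2 \<le> exp (- (s + z)) - exp (- s) + exp (- s) * z"
proof -
  have "exp (- a) * (z\<^sup>2 / (2 + b)) \<le> exp (- s) * (exp (- z) - 1 + z)"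
  proof (rule mult_mono)
    have "z\<^sup>2 / (2 + b) \<le> z\<^sup>2 / (2 + \<bar>z\<bar>)"
      using assms(2) by (intro divide_left_mono) auto
    then show "z\<^sup>2 / (2 + b) \<le> exp (- z) - 1 + z"
      using exp_minus_sub_one_add_ge[of z] by linarith
  qed (use assms in auto)
  then show ?thesis
    unfolding minus_add_distrib exp_add by (simp add: algebra_simps)
qed

lemma has_gderiv_exp_sum:
  fixes x :: "'i \<Rightarrow> 'a::real_inner"
  shows "GDERIV (\<lambda>\<theta>. \<Sum>i\<in>A. w i * exp (- (\<theta> \<bullet> x i))) \<theta>\<^sub>0
    :> (\<Sum>i\<in>A. (w i * exp (- (\<theta>\<^sub>0 \<bullet> x i))) *\<^sub>R (- x i))"
  unfolding gderiv_def
  by (rule derivative_eq_intros refl | simp)+ (simp add: inner_sum_right algebra_simps)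

lemma exp_sum_bregman_ge:
  fixes x :: "'i \<Rightarrow> 'a::real_inner"
  assumes "\<And>i. i \<in> A \<Longrightarrow> 0 \<le> w i"
    and "\<And>i. i \<in> A \<Longrightarrow> \<bar>\<theta>\<^sub>0 \<bullet> x i\<bar> \<le> a"
    and "\<And>i. i \<in> A \<Longrightarrow> \<bar>(\<theta> - \<theta>\<^sub>0) \<bullet> x i\<bar> \<le> b"
  shows "exp (- a) / (2 + b) * (\<Sum>i\<in>A. w i * ((\<theta> - \<theta>\<^sub>0) \<bullet> x i)\<^sup>2)
    \<le> (\<Sum>i\<in>A. w i * exp (- (\<theta> \<bullet> x i))) - (\<Sum>i\<in>A. w i * exp (- (\<theta>\<^sub>0 \<bullet> x i)))
      - (\<Sum>i\<in>A. (w i * exp (- (\<theta>\<^sub>0 \<bullet> x i))) *\<^sub>R (- x i)) \<bullet> (\<theta> - \<theta>\<^sub>0)"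
proof -
  have "w i * (exp (- a) / (2 + b) * ((\<theta> - \<theta>\<^sub>0) \<bullet> x i)\<^sup>2)
      \<le> w i * (exp (- (\<theta>\<^sub>0 \<bullet> x i + (\<theta> - \<theta>\<^sub>0) \<bullet> x i)) - exp (- (\<theta>\<^sub>0 \<bullet> x i))
          + exp (- (\<theta>\<^sub>0 \<bullet> x i)) * ((\<theta> - \<theta>\<^sub>0) \<bullet> x i))" if "i \<in> A" for i
    using that assms by (intro mult_left_mono exp_bregman_ge) auto
  then have "exp (- a) / (2 + b) * (\<Sum>i\<in>A. w i * ((\<theta> - \<theta>\<^sub>0) \<bullet> x i)\<^sup>2)
      \<le> (\<Sum>i\<in>A. w i * (exp (- (\<theta> \<bullet> x i)) - exp (- (\<theta>\<^sub>0 \<bullet> x i))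
          + exp (- (\<theta>\<^sub>0 \<bullet> x i)) * ((\<theta> - \<theta>\<^sub>0) \<bullet> x i)))"
    by (simp add: sum_distrib_left mult.left_commute sum_mono inner_diff_left)
  also have "\<dots> = (\<Sum>i\<in>A. w i * exp (- (\<theta> \<bullet> x i))) - (\<Sum>i\<in>A. w i * exp (- (\<theta>\<^sub>0 \<bullet> x i)))
      + (\<Sum>i\<in>A. w i * exp (- (\<theta>\<^sub>0 \<bullet> x i)) * ((\<theta> - \<theta>\<^sub>0) \<bullet> x i))"
    by (simp add: sum_subtractf sum.distrib algebra_simps)
  also have "(\<Sum>i\<in>A. w i * exp (- (\<theta>\<^sub>0 \<bullet> x i)) * ((\<theta> - \<theta>\<^sub>0) \<bullet> x i))
      = - (\<Sum>i\<in>A. (w i * exp (- (\<theta>\<^sub>0 \<bullet> x i))) *\<^sub>R (- x i)) \<bullet> (\<theta> - \<theta>\<^sub>0)"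
    by (simp add: inner_sum_left sum_negf inner_commute[of "x _"])
  finally show ?thesis by simp
qed

lemma finite_spins: "finite (spins :: ('n::finite \<Rightarrow> real) set)"
proof (rule finite_subset)
  show "spins \<subseteq> PiE UNIV (\<lambda>_::'n. {-1, 1::real})"
    by (auto simp: spins_def)
qed (simp add: finite_PiE)

lemma abs_spin: "\<sigma> \<in> spins \<Longrightarrow> \<bar>\<sigma> w\<bar> = 1"
  unfolding spins_def by (auto dest: spec[of _ w])

lemma flip_in_spins: "\<sigma> \<in> spins \<Longrightarrow> \<sigma>(v := - \<sigma> v) \<in> spins"
  by (auto simp: spins_def)

lemma sum_spins_flip: "(\<Sum>\<sigma>\<in>spins. f (\<sigma>(v := - \<sigma> v))) = (\<Sum>\<sigma>\<in>spins. f \<sigma>)"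
  by (rule sum.reindex_bij_witness[where i = "\<lambda>\<sigma>. \<sigma>(v := - \<sigma> v)" and j = "\<lambda>\<sigma>. \<sigma>(v := - \<sigma> v)"])
    (auto simp: flip_in_spins)

lemma abs_sum_mult_spin_le:
  "\<sigma> \<in> spins \<Longrightarrow> \<bar>\<Sum>w\<in>A. c w * \<sigma> w\<bar> \<le> (\<Sum>w\<in>A. \<bar>c w\<bar>)"
  by (rule order_trans[OF sum_abs]) (simp add: abs_mult abs_spin)

lemma flip_second_moment_ge:
  fixes \<mu> g :: "('n::finite \<Rightarrow> real) \<Rightarrow> real"
  assumes \<mu>_nonneg: "\<And>\<sigma>. \<sigma> \<in> spins \<Longrightarrow> 0 \<le> \<mu> \<sigma>"
    and \<mu>_sum: "(\<Sum>\<sigma>\<in>spins. \<mu> \<sigma>) = 1"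
    and \<mu>_flip: "\<And>\<sigma>. \<sigma> \<in> spins \<Longrightarrow> c * \<mu> \<sigma> \<le> \<mu> (\<sigma>(v := - \<sigma> v))"
    and c: "0 \<le> c" "c \<le> 1"
    and g_flip: "\<And>\<sigma>. \<sigma> \<in> spins \<Longrightarrow> \<bar>g \<sigma> - g (\<sigma>(v := - \<sigma> v))\<bar> = 2 * \<bar>d\<bar>"
  shows "c * d\<^sup>2 \<le> (\<Sum>\<sigma>\<in>spins. \<mu> \<sigma> * (g \<sigma>)\<^sup>2)"
proof -
  have pair: "c * \<mu> \<sigma> * (2 * d\<^sup>2) \<le> \<mu> \<sigma> * (g \<sigma>)\<^sup>2 + \<mu> (\<sigma>(v := - \<sigma> v)) * (g (\<sigma>(v := - \<sigma> v)))\<^sup>2"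
    if \<sigma>: "\<sigma> \<in> spins" for \<sigma>
  proof -
    let ?\<sigma>' = "\<sigma>(v := - \<sigma> v)"
    have "4 * d\<^sup>2 = (2 * \<bar>d\<bar>)\<^sup>2"
      by (simp add: power_mult_distrib)
    also have "\<dots> = (g \<sigma> - g ?\<sigma>')\<^sup>2"
      by (metis g_flip[OF \<sigma>] power2_abs)
    also have "\<dots> \<le> 2 * ((g \<sigma>)\<^sup>2 + (g ?\<sigma>')\<^sup>2)"
      using sum_squares_ge_zero[of "g \<sigma> + g ?\<sigma>'" 0] by (simp add: power2_eq_square algebra_simps)
    finally have "c * \<mu> \<sigma> * (2 * d\<^sup>2) \<le> c * \<mu> \<sigma> * ((g \<sigma>)\<^sup>2 + (g ?\<sigma>')\<^sup>2)"
      using c \<mu>_nonneg[OF \<sigma>] by (intro mult_left_mono) auto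
    moreover have "c * \<mu> \<sigma> * (g \<sigma>)\<^sup>2 \<le> \<mu> \<sigma> * (g \<sigma>)\<^sup>2"
      using c \<mu>_nonneg[OF \<sigma>] by (intro mult_right_mono) (auto simp: mult_left_le_one_le)
    moreover have "c * \<mu> \<sigma> * (g ?\<sigma>')\<^sup>2 \<le> \<mu> ?\<sigma>' * (g ?\<sigma>')\<^sup>2"
      using \<mu>_flip[OF \<sigma>] by (intro mult_right_mono) auto
    ultimately show ?thesis by (simp add: algebra_simps)
  qed
  have "2 * (c * d\<^sup>2) = (\<Sum>\<sigma>\<in>spins. c * \<mu> \<sigma> * (2 * d\<^sup>2))"
    by (simp add: \<mu>_sum flip: sum_distrib_left sum_distrib_right)
  also have "\<dots> \<le> (\<Sum>\<sigma>\<in>spins. \<mu> \<sigma> * (g \<sigma>)\<^sup>2 + \<mu> (\<sigma>(v := - \<sigma> v)) * (g (\<sigma>(v := - \<sigma> v)))\<^sup>2)"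
    by (rule sum_mono) (rule pair)
  also have "\<dots> = 2 * (\<Sum>\<sigma>\<in>spins. \<mu> \<sigma> * (g \<sigma>)\<^sup>2)"
    by (simp add: sum.distrib sum_spins_flip[where f = "\<lambda>\<sigma>. \<mu> \<sigma> * (g \<sigma>)\<^sup>2"])
  finally show ?thesis by simp
qed

lemma sum_off_diagonal_row:
  fixes F :: "'a::finite \<Rightarrow> 'a \<Rightarrow> 'b::comm_monoid_add"
  shows "(\<Sum>a\<in>UNIV. \<Sum>b\<in>UNIV - {a}. if a = v then F a b else 0) = (\<Sum>b\<in>UNIV - {v}. F v b)"
proof -
  have "(\<Sum>a\<in>UNIV. \<Sum>b\<in>UNIV - {a}. if a = v then F a b else 0)
      = (\<Sum>a\<in>UNIV. if a = v then (\<Sum>b\<in>UNIV - {a}. F a b) else 0)"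
    by (intro sum.cong) auto
  then show ?thesis by simp
qed

lemma sum_off_diagonal_column:
  fixes F :: "'a::finite \<Rightarrow> 'a \<Rightarrow> 'b::comm_monoid_add"
  shows "(\<Sum>a\<in>UNIV. \<Sum>b\<in>UNIV - {a}. if b = v then F a b else 0) = (\<Sum>a\<in>UNIV - {v}. F a v)"
  by (simp add: sum.If_cases neq_commute) (intro sum.cong; auto)

lemma ising_H_flip:
  fixes J :: "'n::finite \<Rightarrow> 'n \<Rightarrow> real"
  assumes sym: "\<And>a b. J a b = J b a"
  shows "ising_H J h (\<sigma>(v := - \<sigma> v))
    = ising_H J h \<sigma> - 2 * \<sigma> v * (h v + (\<Sum>b\<in>UNIV - {v}. J v b * \<sigma> b))"
proof -
  define \<sigma>' where "\<sigma>' = \<sigma>(v := - \<sigma> v)"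
  have flip_prod: "\<sigma>' a * \<sigma>' b = \<sigma> a * \<sigma> b - 2 * (if a = v then \<sigma> a * \<sigma> b else 0)
      - 2 * (if b = v then \<sigma> a * \<sigma> b else 0)" if "a \<noteq> b" for a b
    using that by (auto simp: \<sigma>'_def)
  have "(\<Sum>a\<in>UNIV. \<Sum>b\<in>UNIV - {a}. J a b * (\<sigma>' a * \<sigma>' b))
      = (\<Sum>a\<in>UNIV. \<Sum>b\<in>UNIV - {a}. J a b * (\<sigma> a * \<sigma> b)
          - 2 * (if a = v then J a b * (\<sigma> a * \<sigma> b) else 0)
          - 2 * (if b = v then J a b * (\<sigma> a * \<sigma> b) else 0))"
    by (intro sum.cong refl) (auto simp: flip_prod algebra_simps)
  also have "\<dots> = (\<Sum>a\<in>UNIV. \<Sum>b\<in>UNIV - {a}. J a b * (\<sigma> a * \<sigma> b))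
        - 2 * (\<Sum>b\<in>UNIV - {v}. J v b * (\<sigma> v * \<sigma> b)) - 2 * (\<Sum>a\<in>UNIV - {v}. J a v * (\<sigma> a * \<sigma> v))"
    by (simp only: sum_subtractf sum_off_diagonal_row sum_off_diagonal_column flip: sum_distrib_left)
  also have "\<dots> = (\<Sum>a\<in>UNIV. \<Sum>b\<in>UNIV - {a}. J a b * (\<sigma> a * \<sigma> b))
        - 4 * \<sigma> v * (\<Sum>b\<in>UNIV - {v}. J v b * \<sigma> b)"
    by (simp add: sym sum_distrib_left algebra_simps)
  finally have "ising_H J h \<sigma>' = ising_H J h \<sigma> - 2 * \<sigma> v * (\<Sum>b\<in>UNIV - {v}. J v b * \<sigma> b)
      + ((\<Sum>a\<in>UNIV. h a * \<sigma>' a) - (\<Sum>a\<in>UNIV. h a * \<sigma> a))"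
    by (simp add: ising_H_def mult.assoc algebra_simps)
  also have "(\<Sum>a\<in>UNIV. h a * \<sigma>' a) - (\<Sum>a\<in>UNIV. h a * \<sigma> a) = - 2 * \<sigma> v * h v"
    by (simp add: \<sigma>'_def sum.remove[of UNIV v])
  finally show ?thesis by (simp add: \<sigma>'_def[symmetric] algebra_simps)
qed

lemma ising_Z_pos: "ising_Z J h > 0"
proof -
  have "(\<lambda>_. 1) \<in> (spins :: ('n::finite \<Rightarrow> real) set)"
    by (simp add: spins_def)
  then show ?thesis
    unfolding ising_Z_def by (intro sum_pos2[OF finite_spins]) auto
qed

lemma ising_mu_nonneg: "ising_mu J h \<sigma> \<ge> 0"
  using ising_Z_pos[of J h] by (simp add: ising_mu_def)

lemma sum_ising_mu: "(\<Sum>\<sigma>\<in>spins. ising_mu J h \<sigma>) = 1"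
  using ising_Z_pos[of J h] by (simp add: ising_mu_def ising_Z_def flip: sum_divide_distrib)

lemma ising_mu_flip_ge:
  fixes J :: "'n::finite \<Rightarrow> 'n \<Rightarrow> real"
  assumes sym: "\<And>a b. J a b = J b a" and width: "l1_width_le J h \<gamma>"
    and \<sigma>: "\<sigma> \<in> spins"
  shows "exp (- 2 * \<gamma>) * ising_mu J h \<sigma> \<le> ising_mu J h (\<sigma>(v := - \<sigma> v))"
proof -
  have "\<bar>h v + (\<Sum>b\<in>UNIV - {v}. J v b * \<sigma> b)\<bar> \<le> \<bar>h v\<bar> + (\<Sum>b\<in>UNIV - {v}. \<bar>J v b\<bar>)"
    using abs_sum_mult_spin_le[OF \<sigma>, where A = "UNIV - {v}" and c = "J v"] by linarith
  also have "\<dots> \<le> \<gamma>"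
    using width by (simp add: l1_width_le_def add.commute)
  finally have "\<bar>\<sigma> v * (h v + (\<Sum>b\<in>UNIV - {v}. J v b * \<sigma> b))\<bar> \<le> \<gamma>"
    by (simp add: abs_mult abs_spin[OF \<sigma>])
  then have "- 2 * \<gamma> + ising_H J h \<sigma> \<le> ising_H J h (\<sigma>(v := - \<sigma> v))"
    unfolding ising_H_flip[where J = J, OF sym] by linarith
  then have "exp (- 2 * \<gamma>) * exp (ising_H J h \<sigma>) \<le> exp (ising_H J h (\<sigma>(v := - \<sigma> v)))"
    by (simp flip: exp_add)
  then show ?thesis
    using ising_Z_pos[of J h] by (simp add: ising_mu_def divide_right_mono times_divide_eq_right)
qed

definition spin_features :: "'n::finite \<Rightarrow> ('n \<Rightarrow> real) \<Rightarrow> real^'n" where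
  "spin_features u \<sigma> = (\<chi> w. if w = u then \<sigma> u else \<sigma> u * \<sigma> w)"

lemma local_energy_eq_inner: "local_energy u \<sigma> \<theta> = \<theta> \<bullet> spin_features u \<sigma>"
  by (simp add: local_energy_def spin_features_def inner_vec_def sum.remove[of UNIV u]
      sum_distrib_left algebra_simps)

lemma ISO_loss_eq_exp_sum:
  "ISO_loss J h u = (\<lambda>\<theta>. \<Sum>\<sigma>\<in>spins. ising_mu J h \<sigma> * exp (- (\<theta> \<bullet> spin_features u \<sigma>)))"
  by (simp add: fun_eq_iff ISO_loss_def local_energy_eq_inner)

lemma abs_inner_spin_features_le:
  "\<sigma> \<in> spins \<Longrightarrow> \<bar>\<theta> \<bullet> spin_features u \<sigma>\<bar> \<le> l1norm \<theta>"
  unfolding inner_vec_def l1norm_def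
  by (rule order_trans[OF sum_abs], rule sum_mono) (simp add: spin_features_def abs_mult abs_spin)

lemma inner_spin_features_flip:
  assumes "\<sigma> \<in> spins" and "v \<noteq> u"
  shows "\<bar>\<theta> \<bullet> spin_features u \<sigma> - \<theta> \<bullet> spin_features u (\<sigma>(v := - \<sigma> v))\<bar> = 2 * \<bar>\<theta> $ v\<bar>"
proof -
  have "spin_features u \<sigma> - spin_features u (\<sigma>(v := - \<sigma> v)) = axis v (2 * \<sigma> u * \<sigma> v)"
    using assms(2) by (simp add: vec_eq_iff spin_features_def axis_def)
  then have "\<theta> \<bullet> spin_features u \<sigma> - \<theta> \<bullet> spin_features u (\<sigma>(v := - \<sigma> v)) = \<theta> $ v * (2 * \<sigma> u * \<sigma> v)"
    by (simp add: inner_axis flip: inner_diff_right)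
  then show ?thesis
    using assms(1) by (simp add: abs_mult abs_spin)
qed

lemma ising_second_moment_ge:
  fixes J :: "'n::finite \<Rightarrow> 'n \<Rightarrow> real"
  assumes sym: "\<And>a b. J a b = J b a" and width: "l1_width_le J h \<gamma>" and "0 \<le> \<gamma>"
    and "v \<noteq> u"
  shows "exp (- 2 * \<gamma>) * (\<Delta> $ v)\<^sup>2 \<le> (\<Sum>\<sigma>\<in>spins. ising_mu J h \<sigma> * (\<Delta> \<bullet> spin_features u \<sigma>)\<^sup>2)"
  using assms
  by (intro flip_second_moment_ge[where v = v] ising_mu_nonneg sum_ising_mu
      ising_mu_flip_ge[OF sym width] inner_spin_features_flip) auto

lemma l1norm_true_local_param_le:
  assumes "l1_width_le J h \<gamma>"
  shows "l1norm (true_local_param J h u) \<le> \<gamma>"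
proof -
  have "(\<Sum>w\<in>UNIV - {u}. \<bar>true_local_param J h u $ w\<bar>) = (\<Sum>w\<in>UNIV - {u}. \<bar>J u w\<bar>)"
    by (intro sum.cong) (auto simp: true_local_param_def)
  moreover have "true_local_param J h u $ u = h u"
    by (simp add: true_local_param_def)
  ultimately show ?thesis
    using assms by (simp add: l1_width_le_def l1norm_def sum.remove[of UNIV u] add.commute)
qed

lemma l1norm_diff_le: "l1norm (x - y) \<le> l1norm x + l1norm y"
  unfolding l1norm_def by (simp add: sum_mono abs_triangle_ineq4 flip: sum.distrib)

theorem mainTheorem8:
  fixes J :: "'n::finite \<Rightarrow> 'n \<Rightarrow> real" and h :: "'n \<Rightarrow> real"
    and \<gamma> :: real and u :: 'n
  assumes sym: "\<And>a b. J a b = J b a"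
    and gpos: "\<gamma> > 0"
    and width: "l1_width_le J h \<gamma>"
  shows "\<exists>g. GDERIV (ISO_loss J h u) (true_local_param J h u) :> g \<and>
    (\<forall>\<theta>::real^'n. l1norm \<theta> \<le> \<gamma> \<longrightarrow>
       (\<forall>v. v \<noteq> u \<longrightarrow>
          ISO_loss J h u \<theta> - ISO_loss J h u (true_local_param J h u)
            - g \<bullet> (\<theta> - true_local_param J h u)
          \<ge> exp (-3*\<gamma>) / (2 + 2*\<gamma>) * \<bar>\<theta>$v - true_local_param J h u $ v\<bar>^2))"
proof -
  define \<theta>\<^sub>0 where "\<theta>\<^sub>0 = true_local_param J h u"
  define g where "g = (\<Sum>\<sigma>\<in>spins.
    (ising_mu J h \<sigma> * exp (- (\<theta>\<^sub>0 \<bullet> spin_features u \<sigma>))) *\<^sub>R (- spin_features u \<sigma>))"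
  define M where "M = (\<lambda>\<Delta>. \<Sum>\<sigma>\<in>spins. ising_mu J h \<sigma> * (\<Delta> \<bullet> spin_features u \<sigma>)\<^sup>2)"
  have "GDERIV (ISO_loss J h u) \<theta>\<^sub>0 :> g"
    unfolding ISO_loss_eq_exp_sum g_def by (rule has_gderiv_exp_sum)
  moreover have "exp (- 3 * \<gamma>) / (2 + 2 * \<gamma>) * \<bar>\<theta> $ v - \<theta>\<^sub>0 $ v\<bar>\<^sup>2
      \<le> ISO_loss J h u \<theta> - ISO_loss J h u \<theta>\<^sub>0 - g \<bullet> (\<theta> - \<theta>\<^sub>0)"
    if "l1norm \<theta> \<le> \<gamma>" and "v \<noteq> u" for \<theta> v
  proof -
    have "l1norm \<theta>\<^sub>0 \<le> \<gamma>"
      unfolding \<theta>\<^sub>0_def using width by (rule l1norm_true_local_param_le)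
    moreover have "l1norm (\<theta> - \<theta>\<^sub>0) \<le> 2 * \<gamma>"
      using l1norm_diff_le[of \<theta> \<theta>\<^sub>0] \<open>l1norm \<theta> \<le> \<gamma>\<close> calculation by linarith
    ultimately have bregman: "exp (- \<gamma>) / (2 + 2 * \<gamma>) * M (\<theta> - \<theta>\<^sub>0)
        \<le> ISO_loss J h u \<theta> - ISO_loss J h u \<theta>\<^sub>0 - g \<bullet> (\<theta> - \<theta>\<^sub>0)"
      unfolding ISO_loss_eq_exp_sum M_def g_def
      by (intro exp_sum_bregman_ge ising_mu_nonneg order_trans[OF abs_inner_spin_features_le])
    have "exp (- 3 * \<gamma>) / (2 + 2 * \<gamma>) * \<bar>\<theta> $ v - \<theta>\<^sub>0 $ v\<bar>\<^sup>2
        = exp (- \<gamma>) / (2 + 2 * \<gamma>) * (exp (- 2 * \<gamma>) * ((\<theta> - \<theta>\<^sub>0) $ v)\<^sup>2)"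
      by (simp add: mult_exp_exp)
    also have "\<dots> \<le> exp (- \<gamma>) / (2 + 2 * \<gamma>) * M (\<theta> - \<theta>\<^sub>0)"
      using gpos \<open>v \<noteq> u\<close> unfolding M_def
      by (intro mult_left_mono ising_second_moment_ge[OF sym width]) auto
    finally show ?thesis
      using bregman by linarith
  qed
  ultimately show ?thesis
    unfolding \<theta>\<^sub>0_def by blast
qed

end
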